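(* Let $p$ be a prime and $\mathcal{A}$ an irreducible $3\times3$ znz-pattern. Then $\mathcal{A}$ is potentially nilpotent over $\mathbb{Z}_p$ if and only if, up to equivalence, one of the following holds: 1. $\mathcal{A}$ is one of $\begin{bmatrix}0&*&0\\ *&0&*\\ 0&*&0\end{bmatrix}$, $\begin{bmatrix}*&*&0\\ *&0&*\\ *&0&*\end{bmatrix}$, $\begin{bmatrix}0&*&0\\ *&*&*\\ *&0&*\end{bmatrix}$, $\begin{bmatrix}*&*&*\\ *&*&*\\ *&*&0\end{bmatrix}$ (any $p$); 2. $\mathcal{A}$ is one of $\begin{bmatrix}*&*&0\\ *&0&*\\ 0&*&*\end{bmatrix}$, $\begin{bmatrix}*&*&*\\ *&*&*\\ *&0&0\end{bmatrix}$, $\begin{bmatrix}*&*&*\\ *&0&*\\ *&0&*\end{bmatrix}$, $\begin{bmatrix}*&*&*\\ *&*&*\\ *&0&*\end{bmatrix}$, $\begin{bmatrix}0&*&*\\ *&0&*\\ *&*&0\end{bmatrix}$, $\begin{bmatrix}*&*&*\\ *&*&*\\ *&*&*\end{bmatrix}$, and $p\neq2$; 3. $\mathcal{A}$ is one of $\begin{bmatrix}*&*&0\\ *&*&*\\ 0&*&*\end{bmatrix}$, $\begin{bmatrix}*&*&0\\ *&*&*\\ *&0&*\end{bmatrix}$, $\begin{bmatrix}0&*&*\\ *&*&*\\ *&0&*\end{bmatrix}$, and $p\notin\{2,3\}$; 4. $\mathcal{A}=\begin{bmatrix}*&*&0\\ 0&*&*\\ *&0&*\end{bmatrix}$ and the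 polynomial $x^3-1$ splits into three linear factors over $\mathbb{Z}_p$.
   Context: A znz-pattern is a square matrix with entries in $\{*,0\}$; a realization over $\mathbb{F}$ is a matrix over $\mathbb{F}$ with nonzero entries exactly at the $*$ positions; potentially nilpotent over $\mathbb{F}$ means some realization is nilpotent. The digraph $D(\mathcal{A})$ has vertices $1,\ldots,n$ and an arc $(i,j)$ when $\mathcal{A}_{i,j}=*$; $\mathcal{A}$ is irreducible iff $D(\mathcal{A})$ is strongly connected. Two patterns are equivalent if they have the same digraph up to relabeling of vertices (i.e., they are permutation similar). $\mathbb{Z}_p$ is the field with $p$ elements. *)

theory Defs
  imports "Jordan_Normal_Form.Matrix" "Berlekamp_Zassenhaus.Finite_Field"
    "HOL-Computational_Algebra.Polynomial" "HOL-Combinatorics.Permutations"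
begin

text \<open>A znz-pattern of order n is a boolean n x n matrix: True stands for a star
  (nonzero) entry, False for a zero entry.\<close>

definition is_pattern :: "nat \<Rightarrow> bool mat \<Rightarrow> bool" where
  "is_pattern n P \<longleftrightarrow> P \<in> carrier_mat n n"

definition realizes :: "'a::zero mat \<Rightarrow> bool mat \<Rightarrow> bool" where
  "realizes A P \<longleftrightarrow> dim_row A = dim_row P \<and> dim_col A = dim_col P \<and>
     (\<forall>i < dim_row P. \<forall>j < dim_col P. (A $$ (i, j) \<noteq> 0) = P $$ (i, j))"

definition nilpotent_mat :: "'a::semiring_1 mat \<Rightarrow> bool" where
  "nilpotent_mat A \<longleftrightarrow> (\<exists>k. A ^\<^sub>m k = 0\<^sub>m (dim_row A) (dim_col A))"

definition pot_nilpotent :: "'a::field itself \<Rightarrow> bool mat \<Rightarrow> bool" where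
  "pot_nilpotent _ P \<longleftrightarrow> (\<exists>A :: 'a mat. realizes A P \<and> nilpotent_mat A)"

definition arcs :: "bool mat \<Rightarrow> (nat \<times> nat) set" where
  "arcs P = {(i, j). i < dim_row P \<and> j < dim_col P \<and> P $$ (i, j)}"

definition irreducible_pattern :: "bool mat \<Rightarrow> bool" where
  "irreducible_pattern P \<longleftrightarrow>
     (\<forall>i < dim_row P. \<forall>j < dim_row P. (i, j) \<in> (arcs P)\<^sup>*)"

definition equiv_pattern :: "bool mat \<Rightarrow> bool mat \<Rightarrow> bool" where
  "equiv_pattern P Q \<longleftrightarrow> dim_row P = dim_row Q \<and> dim_col P = dim_row P \<and>
     dim_col Q = dim_row Q \<and>
     (\<exists>\<sigma>. \<sigma> permutes {..<dim_row P} \<and>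
        (\<forall>i < dim_row P. \<forall>j < dim_row P. P $$ (\<sigma> i, \<sigma> j) = Q $$ (i, j)))"

abbreviation S :: bool where "S \<equiv> True"
abbreviation Z :: bool where "Z \<equiv> False"

definition pat :: "bool list list \<Rightarrow> bool mat" where
  "pat rs = mat_of_rows_list 3 rs"

definition list1 :: "bool mat list" where
  "list1 = map pat
    [[[Z,S,Z],[S,Z,S],[Z,S,Z]],
     [[S,S,Z],[S,Z,S],[S,Z,S]],
     [[Z,S,Z],[S,S,S],[S,Z,S]],
     [[S,S,S],[S,S,S],[S,S,Z]]]"

definition list2 :: "bool mat list" where
  "list2 = map pat
    [[[S,S,Z],[S,Z,S],[Z,S,S]],
     [[S,S,S],[S,S,S],[S,Z,Z]],
     [[S,S,S],[S,Z,S],[S,Z,S]],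
     [[S,S,S],[S,S,S],[S,Z,S]],
     [[Z,S,S],[S,Z,S],[S,S,Z]],
     [[S,S,S],[S,S,S],[S,S,S]]]"

definition list3 :: "bool mat list" where
  "list3 = map pat
    [[[S,S,Z],[S,S,S],[Z,S,S]],
     [[S,S,Z],[S,S,S],[S,Z,S]],
     [[Z,S,S],[S,S,S],[S,Z,S]]]"

definition pat4 :: "bool mat" where
  "pat4 = pat [[S,S,Z],[Z,S,S],[S,Z,S]]"

definition cube_minus_one_splits :: "'a::comm_ring_1 itself \<Rightarrow> bool" where
  "cube_minus_one_splits _ \<longleftrightarrow> (\<exists>a b c :: 'a.
     [:-1, 0, 0, 1:] = [:-a, 1:] * [:-b, 1:] * [:-c, 1:])"

end

theory Submission
  imports Defs
begin

text \<open>
  A 3 x 3 matrix over a field is nilpotent iff its three characteristic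
  coefficients (trace, sum of principal 2 x 2 minors, determinant) vanish; one direction is
  Cayley-Hamilton, the other comes from the fact that c X = X F with F nilpotent and c \<noteq> 0
  forces X = 0.  Hence potential nilpotency of a pattern is the solvability of three
  polynomial equations whose nonzero variables are prescribed by the pattern, and it is
  invariant under simultaneous relabelling of rows and columns.
\<close>

lemma less3_iff: "(i::nat) < 3 \<longleftrightarrow> i = 0 \<or> i = 1 \<or> i = 2"
  by auto

lemma all3: "(\<forall>i<(3::nat). P i) \<longleftrightarrow> P 0 \<and> P 1 \<and> P 2"
  unfolding less3_iff by auto

lemma ex3: "(\<exists>i<(3::nat). P i) \<longleftrightarrow> P 0 \<or> P 1 \<or> P 2"
  unfolding less3_iff by auto

lemma mult3:
  assumes "X \<in> carrier_mat 3 3" "Y \<in> carrier_mat 3 3" "i < 3" "j < 3"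
  shows "(X * Y) $$ (i, j) =
    X $$ (i, 0) * Y $$ (0, j) + X $$ (i, 1) * Y $$ (1, j) + X $$ (i, 2) * Y $$ (2, j)"
  using assms by (simp add: scalar_prod_def numeral_3_eq_3 numeral_2_eq_2 algebra_simps)

lemma mat3_eqI:
  assumes "X \<in> carrier_mat 3 3" "Y \<in> carrier_mat 3 3"
    and "\<forall>i<3. \<forall>j<3. X $$ (i, j) = Y $$ (i, j)"
  shows "X = Y"
  using assms by (intro eq_matI) auto

text \<open>The coefficients of the characteristic polynomial
  x^3 - tr3 A x^2 + minors3 A x - det3 A of a 3 x 3 matrix.\<close>

definition tr3 :: "'a::comm_ring_1 mat \<Rightarrow> 'a" where
  "tr3 A = A $$ (0, 0) + A $$ (1, 1) + A $$ (2, 2)"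

definition minors3 :: "'a::comm_ring_1 mat \<Rightarrow> 'a" where
  "minors3 A = A $$ (0, 0) * A $$ (1, 1) - A $$ (0, 1) * A $$ (1, 0)
     + A $$ (0, 0) * A $$ (2, 2) - A $$ (0, 2) * A $$ (2, 0)
     + A $$ (1, 1) * A $$ (2, 2) - A $$ (1, 2) * A $$ (2, 1)"

definition det3 :: "'a::comm_ring_1 mat \<Rightarrow> 'a" where
  "det3 A = A $$ (0, 0) * (A $$ (1, 1) * A $$ (2, 2) - A $$ (1, 2) * A $$ (2, 1))
     - A $$ (0, 1) * (A $$ (1, 0) * A $$ (2, 2) - A $$ (1, 2) * A $$ (2, 0))
     + A $$ (0, 2) * (A $$ (1, 0) * A $$ (2, 1) - A $$ (1, 1) * A $$ (2, 0))"

lemma cayley_hamilton3: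
  fixes A :: "'a::comm_ring_1 mat"
  assumes A: "A \<in> carrier_mat 3 3"
  shows "A * A * A = tr3 A \<cdot>\<^sub>m (A * A) - minors3 A \<cdot>\<^sub>m A + det3 A \<cdot>\<^sub>m 1\<^sub>m 3"
proof (rule mat3_eqI)
  show "\<forall>i<3. \<forall>j<3. (A * A * A) $$ (i, j) =
      (tr3 A \<cdot>\<^sub>m (A * A) - minors3 A \<cdot>\<^sub>m A + det3 A \<cdot>\<^sub>m 1\<^sub>m 3) $$ (i, j)"
    using A unfolding all3
    by (simp del: index_mult_mat(1) add: mult3 tr3_def minors3_def det3_def algebra_simps)
qed (use A in auto)

section \<open>Nilpotent 3 x 3 matrices\<close>

lemma pow_mult_commute:
  fixes A C :: "'a::semiring_1 mat"
  assumes A: "A \<in> carrier_mat n n" and C: "C \<in> carrier_mat n n" and comm: "A * C = C * A"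
  shows "(A * C) ^\<^sub>m k = A ^\<^sub>m k * C ^\<^sub>m k"
proof -
  interpret semiring "ring_mat TYPE('a) n ()" by (rule semiring_mat)
  have "(A * C) [^]\<^bsub>ring_mat TYPE('a) n ()\<^esub> k =
      A [^]\<^bsub>ring_mat TYPE('a) n ()\<^esub> k * C [^]\<^bsub>ring_mat TYPE('a) n ()\<^esub> k"
    using pow_mult_distrib[of A C k] A C comm by (simp add: ring_mat_simps)
  then show ?thesis
    using A C by (simp add: pow_mat_ring_pow[symmetric])
qed

text \<open>If c X = X F with c \<noteq> 0 and F nilpotent then X = 0, since c^m X = X F^m for all m.\<close>

lemma scaled_eq_mult_nilpotent_zero:
  fixes X F :: "'a::field mat"
  assumes X: "X \<in> carrier_mat n n" and F: "F \<in> carrier_mat n n"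
    and c: "c \<noteq> 0" and eq: "c \<cdot>\<^sub>m X = X * F" and nil: "F ^\<^sub>m k = 0\<^sub>m n n"
  shows "X = 0\<^sub>m n n"
proof -
  have pow: "c ^ m \<cdot>\<^sub>m X = X * F ^\<^sub>m m" for m
  proof (induction m)
    case 0
    show ?case using X F by (intro eq_matI) auto
  next
    case (Suc m)
    have "c ^ Suc m \<cdot>\<^sub>m X = c ^ m \<cdot>\<^sub>m (X * F)"
      using X eq[symmetric] by (intro eq_matI) auto
    also have "\<dots> = (c ^ m \<cdot>\<^sub>m X) * F"
      using X F by (simp add: mult_smult_assoc_mat)
    also have "\<dots> = X * F ^\<^sub>m Suc m"
      using X F by (simp add: Suc assoc_mult_mat[OF X pow_carrier_mat[OF F] F])
    finally show ?case .
  qed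
  have zero: "c ^ k \<cdot>\<^sub>m X = 0\<^sub>m n n"
    using pow[of k] nil X by simp
  show ?thesis
  proof (rule eq_matI)
    fix i j assume "i < dim_row (0\<^sub>m n n :: 'a mat)" "j < dim_col (0\<^sub>m n n :: 'a mat)"
    then have ij: "i < n" "j < n" by auto
    have "c ^ k * X $$ (i, j) = 0"
      using arg_cong[OF zero, of "\<lambda>M. M $$ (i, j)"] ij X by simp
    then show "X $$ (i, j) = 0\<^sub>m n n $$ (i, j)"
      using c ij by simp
  qed (use X in auto)
qed

lemma nilpotent_commuting_factor_zero:
  fixes A C X :: "'a::field mat"
  assumes A: "A \<in> carrier_mat n n" and C: "C \<in> carrier_mat n n" and X: "X \<in> carrier_mat n n"
    and comm: "A * C = C * A" and nil: "A ^\<^sub>m k = 0\<^sub>m n n"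
    and c: "c \<noteq> 0" and eq: "c \<cdot>\<^sub>m X = X * (A * C)"
  shows "X = 0\<^sub>m n n"
proof (rule scaled_eq_mult_nilpotent_zero[OF X _ c eq])
  show "A * C \<in> carrier_mat n n" using A C by simp
  show "(A * C) ^\<^sub>m k = 0\<^sub>m n n"
    using pow_mult_commute[OF A C comm] nil C by simp
qed

text \<open>The coefficients are
  killed in turn (determinant, minors, trace) by identities c X = X (A C) that follow from
  Cayley-Hamilton, where C is a polynomial in A and c is the coefficient in question.\<close>

lemma nilpotent3_det_zero:
  fixes A :: "'a::field mat"
  assumes A: "A \<in> carrier_mat 3 3" and nil: "A ^\<^sub>m k = 0\<^sub>m 3 3"
  shows "det3 A = 0"
proof (rule ccontr)
  assume d: "det3 A \<noteq> 0"
  define B where "B = A * A - tr3 A \<cdot>\<^sub>m A + minors3 A \<cdot>\<^sub>m 1\<^sub>m 3"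
  have B: "B \<in> carrier_mat 3 3" and B_entry: "\<And>i j. i < 3 \<Longrightarrow> j < 3 \<Longrightarrow>
      B $$ (i, j) = (A * A) $$ (i, j) - tr3 A * A $$ (i, j) + (if i = j then minors3 A else 0)"
    using A by (auto simp: B_def)
  have "A * B = B * A"
    by (rule mat3_eqI)
      (use A B in \<open>simp_all del: index_mult_mat(1) add: all3 mult3 B_entry algebra_simps\<close>)
  moreover have "det3 A \<cdot>\<^sub>m 1\<^sub>m 3 = 1\<^sub>m 3 * (A * B)"
    by (rule mat3_eqI)
      (use A B in \<open>simp_all del: index_mult_mat(1)
        add: all3 mult3 B_entry tr3_def minors3_def det3_def algebra_simps\<close>)
  ultimately have "1\<^sub>m 3 = (0\<^sub>m 3 3 :: 'a mat)"
    using nilpotent_commuting_factor_zero[OF A B _ _ nil d] by simp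
  from arg_cong[OF this, of "\<lambda>M. M $$ (0, 0)"] show False
    by simp
qed

lemma nilpotent3_minors_zero:
  fixes A :: "'a::field mat"
  assumes A: "A \<in> carrier_mat 3 3" and nil: "A ^\<^sub>m k = 0\<^sub>m 3 3" and d: "det3 A = 0"
  shows "minors3 A = 0"
proof (rule ccontr)
  assume s: "minors3 A \<noteq> 0"
  define G where "G = tr3 A \<cdot>\<^sub>m 1\<^sub>m 3 - A"
  have G: "G \<in> carrier_mat 3 3" and G_entry: "\<And>i j. i < 3 \<Longrightarrow> j < 3 \<Longrightarrow>
      G $$ (i, j) = (if i = j then tr3 A else 0) - A $$ (i, j)"
    using A by (auto simp: G_def)
  have "A * G = G * A"
    by (rule mat3_eqI)
      (use A G in \<open>simp_all del: index_mult_mat(1) add: all3 mult3 G_entry algebra_simps\<close>)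
  moreover have "minors3 A \<cdot>\<^sub>m A - det3 A \<cdot>\<^sub>m 1\<^sub>m 3 = A * (A * G)"
    by (rule mat3_eqI)
      (use A G in \<open>simp_all del: index_mult_mat(1)
        add: all3 mult3 G_entry minus_carrier_mat tr3_def minors3_def det3_def algebra_simps\<close>)
  moreover have "minors3 A \<cdot>\<^sub>m A - det3 A \<cdot>\<^sub>m 1\<^sub>m 3 = minors3 A \<cdot>\<^sub>m A"
    using d A by (intro eq_matI) auto
  ultimately have "A = 0\<^sub>m 3 3"
    using nilpotent_commuting_factor_zero[OF A G A _ nil s] by simp
  then show False
    using s by (simp add: minors3_def)
qed

lemma nilpotent3_trace_zero:
  fixes A :: "'a::field mat"
  assumes A: "A \<in> carrier_mat 3 3" and nil: "A ^\<^sub>m k = 0\<^sub>m 3 3"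
    and s: "minors3 A = 0" and d: "det3 A = 0"
  shows "tr3 A = 0"
proof (rule ccontr)
  assume t: "tr3 A \<noteq> 0"
  have "(A * A) * (A * 1\<^sub>m 3) = A * A * A"
    using A by simp
  also have "\<dots> = tr3 A \<cdot>\<^sub>m (A * A)"
    using cayley_hamilton3[OF A] s d A by (auto intro!: eq_matI)
  finally have "A * A = 0\<^sub>m 3 3"
    using nilpotent_commuting_factor_zero[OF A one_carrier_mat mult_carrier_mat[OF A A] _ nil t] A
    by (simp add: eq_commute)
  moreover have "tr3 (A * A) = tr3 A * tr3 A - 2 * minors3 A"
    using A by (simp del: index_mult_mat(1) add: mult3 tr3_def minors3_def algebra_simps)
  ultimately show False
    using s t by (simp add: tr3_def)
qed

lemma nilpotent3_coeffs_zero: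
  fixes A :: "'a::field mat"
  assumes "A \<in> carrier_mat 3 3" and "A ^\<^sub>m k = 0\<^sub>m 3 3"
  shows "tr3 A = 0 \<and> minors3 A = 0 \<and> det3 A = 0"
  using nilpotent3_det_zero[OF assms] nilpotent3_minors_zero[OF assms]
    nilpotent3_trace_zero[OF assms] by blast

lemma nilpotent3_iff:
  fixes A :: "'a::field mat"
  assumes A: "A \<in> carrier_mat 3 3"
  shows "nilpotent_mat A \<longleftrightarrow> tr3 A = 0 \<and> minors3 A = 0 \<and> det3 A = 0"
proof
  assume "nilpotent_mat A"
  then obtain k where "A ^\<^sub>m k = 0\<^sub>m 3 3"
    using A unfolding nilpotent_mat_def by auto
  then show "tr3 A = 0 \<and> minors3 A = 0 \<and> det3 A = 0"
    using nilpotent3_coeffs_zero[OF A] by blast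
next
  assume "tr3 A = 0 \<and> minors3 A = 0 \<and> det3 A = 0"
  then have "A * A * A = 0\<^sub>m 3 3"
    using cayley_hamilton3[OF A] A by (auto intro!: eq_matI)
  then have "A ^\<^sub>m 3 = 0\<^sub>m 3 3"
    by (simp add: numeral_3_eq_3)
  then show "nilpotent_mat A"
    using A unfolding nilpotent_mat_def by auto
qed

section \<open>Realizations and relabelling\<close>

lemma realizes_carrier:
  assumes "realizes A P" "P \<in> carrier_mat n m"
  shows "A \<in> carrier_mat n m"
  using assms unfolding realizes_def by auto

lemma realizes_entry:
  assumes "realizes A P" "P \<in> carrier_mat n m" "i < n" "j < m"
  shows "A $$ (i, j) \<noteq> 0 \<longleftrightarrow> P $$ (i, j)"
  using assms unfolding realizes_def by auto

lemma pot_nilpotent3_iff: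
  assumes P: "P \<in> carrier_mat 3 3"
  shows "pot_nilpotent TYPE('a::field) P \<longleftrightarrow>
    (\<exists>A :: 'a mat. realizes A P \<and> tr3 A = 0 \<and> minors3 A = 0 \<and> det3 A = 0)"
  unfolding pot_nilpotent_def using nilpotent3_iff realizes_carrier[OF _ P] by blast

text \<open>The six permutations of {0, 1, 2}, as lists of images.\<close>

definition perms3 :: "nat list list" where
  "perms3 = [[0, 1, 2], [0, 2, 1], [1, 0, 2], [1, 2, 0], [2, 0, 1], [2, 1, 0]]"

lemma permutes3_in_perms3:
  assumes "\<sigma> permutes {..<3::nat}"
  shows "[\<sigma> 0, \<sigma> 1, \<sigma> 2] \<in> set perms3"
proof -
  have "\<sigma> 0 < 3" "\<sigma> 1 < 3" "\<sigma> 2 < 3"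
    using permutes_in_image[OF assms] by auto
  moreover have "\<sigma> 0 \<noteq> \<sigma> 1" "\<sigma> 0 \<noteq> \<sigma> 2" "\<sigma> 1 \<noteq> \<sigma> 2"
    using permutes_inj[OF assms] by (simp_all add: inj_eq)
  ultimately show ?thesis
    unfolding less3_iff perms3_def by (elim disjE) simp_all
qed

lemma perms3_permutes:
  assumes "l \<in> set perms3"
  shows "(\<lambda>i. if i < 3 then l ! i else i) permutes {..<3::nat}"
proof (rule bij_imp_permutes)
  have "{..<3::nat} = {0, 1, 2}" by auto
  moreover from assms have "l = [0, 1, 2] \<or> l = [0, 2, 1] \<or> l = [1, 0, 2] \<or> l = [1, 2, 0] \<or>
      l = [2, 0, 1] \<or> l = [2, 1, 0]"
    unfolding perms3_def by simp
  ultimately show "bij_betw (\<lambda>i. if i < 3 then l ! i else i) {..<3} {..<3}"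
    unfolding bij_betw_def by (elim disjE) (auto simp: inj_on_def)
qed auto

lemma coeffs_relabel:
  fixes A :: "'a::comm_ring_1 mat"
  assumes "\<sigma> permutes {..<3::nat}"
  defines "B \<equiv> mat 3 3 (\<lambda>(i, j). A $$ (\<sigma> i, \<sigma> j))"
  shows "tr3 B = tr3 A \<and> minors3 B = minors3 A \<and> det3 B = det3 A"
proof -
  have "[\<sigma> 0, \<sigma> 1, \<sigma> 2] \<in> set perms3"
    by (rule permutes3_in_perms3[OF assms(1)])
  then show ?thesis
    unfolding perms3_def B_def tr3_def minors3_def det3_def
    by (simp only: set_simps insert_iff list.inject empty_iff)
      (elim disjE conjE; simp add: algebra_simps)
qed

lemma pot_nilpotent_relabel:
  assumes P: "P \<in> carrier_mat 3 3" and Q: "Q \<in> carrier_mat 3 3" and "equiv_pattern P Q"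
    and pot: "pot_nilpotent TYPE('a::field) P"
  shows "pot_nilpotent TYPE('a) Q"
proof -
  obtain \<sigma> where \<sigma>: "\<sigma> permutes {..<3}"
    and PQ: "\<forall>i<3. \<forall>j<3. P $$ (\<sigma> i, \<sigma> j) = Q $$ (i, j)"
    using \<open>equiv_pattern P Q\<close> P unfolding equiv_pattern_def by auto
  obtain A :: "'a mat" where A: "realizes A P" and coeffs: "tr3 A = 0" "minors3 A = 0" "det3 A = 0"
    using pot pot_nilpotent3_iff[OF P] by blast
  define B where "B = mat 3 3 (\<lambda>(i, j). A $$ (\<sigma> i, \<sigma> j))"
  have "realizes B Q"
    unfolding realizes_def
  proof (intro conjI allI impI)
    fix i j assume "i < dim_row Q" "j < dim_col Q"
    then have ij: "i < 3" "j < 3" and "\<sigma> i < 3" "\<sigma> j < 3"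
      using Q permutes_in_image[OF \<sigma>] by auto
    then show "(B $$ (i, j) \<noteq> 0) = Q $$ (i, j)"
      using A P PQ unfolding B_def realizes_def by auto
  qed (use Q in \<open>auto simp: B_def\<close>)
  then show ?thesis
    using coeffs coeffs_relabel[OF \<sigma>, of A] pot_nilpotent3_iff[OF Q] unfolding B_def by auto
qed

lemma equiv_pattern_sym:
  assumes "equiv_pattern P Q"
  shows "equiv_pattern Q P"
proof -
  obtain \<sigma> where dims: "dim_row P = dim_row Q" "dim_col P = dim_row P" "dim_col Q = dim_row Q"
    and \<sigma>: "\<sigma> permutes {..<dim_row P}"
    and PQ: "\<forall>i<dim_row P. \<forall>j<dim_row P. P $$ (\<sigma> i, \<sigma> j) = Q $$ (i, j)"
    using assms unfolding equiv_pattern_def by blast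
  define \<tau> where "\<tau> = Hilbert_Choice.inv \<sigma>"
  have \<tau>: "\<tau> permutes {..<dim_row P}"
    unfolding \<tau>_def using permutes_inv[OF \<sigma>] .
  have "Q $$ (\<tau> i, \<tau> j) = P $$ (i, j)" if "i < dim_row P" "j < dim_row P" for i j
  proof -
    have "\<tau> i < dim_row P" "\<tau> j < dim_row P"
      using permutes_in_image[OF \<tau>] that by auto
    then have "Q $$ (\<tau> i, \<tau> j) = P $$ (\<sigma> (\<tau> i), \<sigma> (\<tau> j))"
      using PQ by simp
    also have "\<dots> = P $$ (i, j)"
      unfolding \<tau>_def using permutes_inverses(1)[OF \<sigma>] by simp
    finally show ?thesis .
  qed
  then show ?thesis
    unfolding equiv_pattern_def using dims \<tau> by auto
qed

lemma pot_nilpotent_equiv: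
  assumes "P \<in> carrier_mat 3 3" "Q \<in> carrier_mat 3 3" "equiv_pattern P Q"
  shows "pot_nilpotent TYPE('a::field) P \<longleftrightarrow> pot_nilpotent TYPE('a) Q"
  using pot_nilpotent_relabel[OF assms] pot_nilpotent_relabel[OF assms(2,1) equiv_pattern_sym[OF assms(3)]]
  by blast

lemma pat_carrier: "length q = 3 \<Longrightarrow> pat q \<in> carrier_mat 3 3"
  by (simp add: pat_def mat_of_rows_list_def)

lemma pat_index: "length q = 3 \<Longrightarrow> i < 3 \<Longrightarrow> j < 3 \<Longrightarrow> pat q $$ (i, j) = q ! i ! j"
  by (simp add: pat_def mat_of_rows_list_def)

lemma realizes_pat_entry:
  assumes "length q = 3" "realizes A (pat q)" "i < 3" "j < 3"
  shows "A $$ (i, j) \<noteq> 0 \<longleftrightarrow> q ! i ! j"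
  using realizes_entry[OF assms(2) pat_carrier[OF assms(1)] assms(3,4)] pat_index[OF assms(1,3,4)]
  by simp

section \<open>Connectivity and relabelling of 3-vertex digraphs\<close>

text \<open>A pattern is handled through its adjacency function b, with b i j for "entry (i, j) is a
  star".  All predicates below inspect b on {0, 1, 2} only, which makes them executable.\<close>

text \<open>On three vertices strong connectivity means that every vertex reaches every other one in
  at most two steps.\<close>

definition two_step_connected :: "(nat \<Rightarrow> nat \<Rightarrow> bool) \<Rightarrow> bool" where
  "two_step_connected b \<longleftrightarrow>
     (\<forall>i<3. \<forall>j<3. i \<noteq> j \<longrightarrow> b i j \<or> (\<exists>k<3. b i k \<and> b k j))"

text \<open>Irreducibility gives two-step connectivity: otherwise the vertex i together with its
  out-neighbours would be a proper subset closed under arcs, and j would not be reachable.\<close>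

lemma irreducible_two_step_connected:
  assumes P: "P \<in> carrier_mat 3 3" and irr: "irreducible_pattern P"
  shows "two_step_connected (\<lambda>i j. P $$ (i, j))"
  unfolding two_step_connected_def
proof (intro allI impI)
  fix i j :: nat assume ij: "i < 3" "j < 3" "i \<noteq> j"
  show "P $$ (i, j) \<or> (\<exists>k<3. P $$ (i, k) \<and> P $$ (k, j))"
  proof (rule ccontr)
    assume none: "\<not> ?thesis"
    define T where "T = {m. m = i \<or> (m < 3 \<and> P $$ (i, m))}"
    have closed: "b \<in> T" if ab: "(a, b) \<in> arcs P" and a: "a \<in> T" for a b
    proof -
      have a3: "a < 3" and b3: "b < 3" and Pab: "P $$ (a, b)"
        using ab P unfolding arcs_def by auto
      show ?thesis
      proof (cases "a = i")
        case True
        then show ?thesis using Pab b3 unfolding T_def by simp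
      next
        case False
        then have Pia: "P $$ (i, a)" using a unfolding T_def by simp
        then have "a \<noteq> j" "b \<noteq> j" using none Pab a3 by auto
        with \<open>a \<noteq> i\<close> ij a3 b3 have "b = i \<or> b = a" by (auto simp: less3_iff)
        then show ?thesis using Pia a3 unfolding T_def by auto
      qed
    qed
    have "(i, j) \<in> (arcs P)\<^sup>*"
      using irr P ij unfolding irreducible_pattern_def by auto
    then have "j \<in> T"
    proof (induction rule: rtrancl_induct)
      case base
      show ?case by (simp add: T_def)
    next
      case (step y z)
      then show ?case using closed by blast
    qed
    then show False
      using none ij unfolding T_def by auto
  qed
qed

definition relabels_to :: "(nat \<Rightarrow> nat \<Rightarrow> bool) \<Rightarrow> (nat \<Rightarrow> nat \<Rightarrow> bool) \<Rightarrow> bool" where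
  "relabels_to b c \<longleftrightarrow> (\<exists>l\<in>set perms3. \<forall>i<3. \<forall>j<3. b (l ! i) (l ! j) = c i j)"

lemma relabels_to_equiv_pattern:
  assumes P: "P \<in> carrier_mat 3 3" and Q: "Q \<in> carrier_mat 3 3"
    and rel: "relabels_to (\<lambda>i j. P $$ (i, j)) c" and c: "\<forall>i<3. \<forall>j<3. c i j = Q $$ (i, j)"
  shows "equiv_pattern P Q"
proof -
  obtain l where l: "l \<in> set perms3" and Pc: "\<forall>i<3. \<forall>j<3. P $$ (l ! i, l ! j) = c i j"
    using rel unfolding relabels_to_def by blast
  define \<sigma> where "\<sigma> = (\<lambda>i. if i < 3 then l ! i else i)"
  have "\<forall>i<3. \<forall>j<3. P $$ (\<sigma> i, \<sigma> j) = Q $$ (i, j)"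
    using Pc c unfolding \<sigma>_def by simp
  then show ?thesis
    unfolding equiv_pattern_def using P Q perms3_permutes[OF l] unfolding \<sigma>_def by auto
qed

section \<open>Obstructions to potential nilpotency over any field\<close>

definition unique_diag_star :: "(nat \<Rightarrow> nat \<Rightarrow> bool) \<Rightarrow> bool" where
  "unique_diag_star b \<longleftrightarrow> (\<exists>i<3. b i i \<and> (\<forall>k<3. b k k \<longrightarrow> k = i))"

text \<open>With a single diagonal star the trace equals that nonzero entry.\<close>

lemma unique_diag_star_not_pot_nilpotent:
  assumes P: "P \<in> carrier_mat 3 3" and star: "unique_diag_star (\<lambda>i j. P $$ (i, j))"
  shows "\<not> pot_nilpotent TYPE('a::field) P"
proof
  assume "pot_nilpotent TYPE('a) P"
  then obtain A :: "'a mat" where A: "realizes A P" and "tr3 A = 0"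
    using pot_nilpotent3_iff[OF P] by blast
  obtain i where i: "i < 3" "P $$ (i, i)" and only: "\<forall>k<3. P $$ (k, k) \<longrightarrow> k = i"
    using star unfolding unique_diag_star_def by blast
  have "A $$ (k, k) = 0" if "k < 3" "k \<noteq> i" for k
    using only realizes_entry[OF A P that(1) that(1)] that by blast
  then have "tr3 A = A $$ (i, i)"
    unfolding tr3_def using i(1) by (auto simp: less3_iff)
  moreover have "A $$ (i, i) \<noteq> 0"
    using realizes_entry[OF A P i(1) i(1)] i(2) by simp
  ultimately show False
    using \<open>tr3 A = 0\<close> by simp
qed

definition transversal :: "(nat \<Rightarrow> nat \<Rightarrow> bool) \<Rightarrow> nat list \<Rightarrow> bool" where
  "transversal b l \<longleftrightarrow> (\<forall>i<3. b i (l ! i))"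

definition unique_transversal :: "(nat \<Rightarrow> nat \<Rightarrow> bool) \<Rightarrow> bool" where
  "unique_transversal b \<longleftrightarrow>
     (\<exists>l\<in>set perms3. transversal b l \<and> (\<forall>l'\<in>set perms3. transversal b l' \<longrightarrow> l' = l))"

definition transversal_prod :: "'a::comm_ring_1 mat \<Rightarrow> nat list \<Rightarrow> 'a" where
  "transversal_prod A l = A $$ (0, l ! 0) * A $$ (1, l ! 1) * A $$ (2, l ! 2)"

definition perm3_sign :: "nat list \<Rightarrow> 'a::comm_ring_1" where
  "perm3_sign l = (if l \<in> {[0, 1, 2], [1, 2, 0], [2, 0, 1]} then 1 else -1)"

lemma sum_single_nonzero:
  assumes "finite X" "x \<in> X" "\<forall>y\<in>X. y \<noteq> x \<longrightarrow> f y = 0"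
  shows "sum f X = f x"
  using assms by (simp add: sum.remove)

lemma det3_leibniz:
  "det3 A = (\<Sum>l\<in>set perms3. perm3_sign l * transversal_prod A l)"
proof -
  have "distinct perms3" by (simp add: perms3_def)
  then have "(\<Sum>l\<in>set perms3. perm3_sign l * transversal_prod A l) =
      sum_list (map (\<lambda>l. perm3_sign l * transversal_prod A l) perms3)"
    by (simp add: sum_list_distinct_conv_sum_set)
  also have "\<dots> = det3 A"
    by (simp add: perms3_def perm3_sign_def transversal_prod_def det3_def algebra_simps)
  finally show ?thesis ..
qed

lemma transversal_prod_nonzero:
  fixes A :: "'a::field mat"
  assumes A: "realizes A P" and P: "P \<in> carrier_mat 3 3" and l: "l \<in> set perms3"
  shows "transversal_prod A l \<noteq> 0 \<longleftrightarrow> transversal (\<lambda>i j. P $$ (i, j)) l"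
proof -
  have lt: "l ! 0 < 3" "l ! 1 < 3" "l ! 2 < 3"
    using l unfolding perms3_def by auto
  show ?thesis
    unfolding transversal_prod_def transversal_def all3
    using realizes_entry[OF A P _ lt(1)] realizes_entry[OF A P _ lt(2)]
      realizes_entry[OF A P _ lt(3)] by simp
qed

text \<open>With a single transversal the determinant is, up to sign, one nonzero product.\<close>

lemma unique_transversal_not_pot_nilpotent:
  assumes P: "P \<in> carrier_mat 3 3" and uniq: "unique_transversal (\<lambda>i j. P $$ (i, j))"
  shows "\<not> pot_nilpotent TYPE('a::field) P"
proof
  assume "pot_nilpotent TYPE('a) P"
  then obtain A :: "'a mat" where A: "realizes A P" and "det3 A = 0"
    using pot_nilpotent3_iff[OF P] by blast
  obtain l where l: "l \<in> set perms3" "transversal (\<lambda>i j. P $$ (i, j)) l"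
    and only: "\<forall>l'\<in>set perms3. transversal (\<lambda>i j. P $$ (i, j)) l' \<longrightarrow> l' = l"
    using uniq unfolding unique_transversal_def by blast
  have "transversal_prod A l' = 0" if "l' \<in> set perms3" "l' \<noteq> l" for l'
    using only that transversal_prod_nonzero[OF A P that(1)] by blast
  then have "det3 A = perm3_sign l * transversal_prod A l"
    unfolding det3_leibniz using l(1) by (intro sum_single_nonzero) auto
  moreover have "perm3_sign l \<noteq> (0::'a)"
    by (simp add: perm3_sign_def)
  ultimately show False
    using \<open>det3 A = 0\<close> transversal_prod_nonzero[OF A P l(1)] l(2) by simp
qed

section \<open>The classification of strongly connected patterns\<close>

definition exceptional_rows :: "bool list list list" where
  "exceptional_rows =
    [[[Z,S,Z],[S,Z,S],[Z,S,Z]], [[S,S,Z],[S,Z,S],[S,Z,S]],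
     [[Z,S,Z],[S,S,S],[S,Z,S]], [[S,S,S],[S,S,S],[S,S,Z]],
     [[S,S,Z],[S,Z,S],[Z,S,S]], [[S,S,S],[S,S,S],[S,Z,Z]],
     [[S,S,S],[S,Z,S],[S,Z,S]], [[S,S,S],[S,S,S],[S,Z,S]],
     [[Z,S,S],[S,Z,S],[S,S,Z]], [[S,S,S],[S,S,S],[S,S,S]],
     [[S,S,Z],[S,S,S],[Z,S,S]], [[S,S,Z],[S,S,S],[S,Z,S]],
     [[Z,S,S],[S,S,S],[S,Z,S]],
     [[S,S,Z],[Z,S,S],[S,Z,S]]]"

definition exceptional_patterns :: "bool mat list" where
  "exceptional_patterns = list1 @ list2 @ list3 @ [pat4]"

lemma exceptional_patterns_rows: "exceptional_patterns = map pat exceptional_rows"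
  by (simp add: exceptional_patterns_def exceptional_rows_def list1_def list2_def list3_def
      pat4_def)

text \<open>The statement depends only on the nine values b i j,
  so it reduces to a finite check over all boolean 3 x 3 arrays, done by evaluation.\<close>

lemma classification3:
  assumes "two_step_connected b"
  shows "(\<exists>q\<in>set exceptional_rows. relabels_to b (\<lambda>i j. q ! i ! j)) \<or>
    unique_diag_star b \<or> unique_transversal b"
proof -
  have "\<forall>x00 x01 x02 x10 x11 x12 x20 x21 x22.
    let c = (\<lambda>i j. [[x00, x01, x02], [x10, x11, x12], [x20, x21, x22]] ! i ! j) in
    two_step_connected c \<longrightarrow>
      (\<exists>q\<in>set exceptional_rows. relabels_to c (\<lambda>i j. q ! i ! j)) \<or>
      unique_diag_star c \<or> unique_transversal c"
    unfolding two_step_connected_def relabels_to_def unique_diag_star_def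
      unique_transversal_def transversal_def all3 ex3
    by code_simp
  from this[rule_format, of "b 0 0" "b 0 1" "b 0 2" "b 1 0" "b 1 1" "b 1 2" "b 2 0" "b 2 1" "b 2 2"]
  show ?thesis
    using assms
    unfolding two_step_connected_def relabels_to_def unique_diag_star_def
      unique_transversal_def transversal_def all3 ex3 Let_def perms3_def
    by simp
qed

lemma exceptional_carrier:
  assumes "Q \<in> set exceptional_patterns"
  shows "Q \<in> carrier_mat 3 3"
  using assms pat_carrier unfolding exceptional_patterns_rows
  by (auto simp: exceptional_rows_def)

lemma pot_nilpotent_iff_exceptional:
  assumes P: "P \<in> carrier_mat 3 3" and irr: "irreducible_pattern P"
  shows "pot_nilpotent TYPE('a::field) P \<longleftrightarrow>
    (\<exists>Q\<in>set exceptional_patterns. equiv_pattern P Q \<and> pot_nilpotent TYPE('a) Q)"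
proof
  assume pot: "pot_nilpotent TYPE('a) P"
  obtain q where q: "q \<in> set exceptional_rows"
    and rel: "relabels_to (\<lambda>i j. P $$ (i, j)) (\<lambda>i j. q ! i ! j)"
    using classification3[OF irreducible_two_step_connected[OF P irr]] pot
      unique_diag_star_not_pot_nilpotent[OF P] unique_transversal_not_pot_nilpotent[OF P] by blast
  have len: "length q = 3"
    using q by (auto simp: exceptional_rows_def)
  have "equiv_pattern P (pat q)"
    using relabels_to_equiv_pattern[OF P pat_carrier[OF len] rel] pat_index[OF len] by simp
  moreover have "pat q \<in> set exceptional_patterns"
    using q unfolding exceptional_patterns_rows by simp
  ultimately show "\<exists>Q\<in>set exceptional_patterns. equiv_pattern P Q \<and> pot_nilpotent TYPE('a) Q"
    using pot pot_nilpotent_equiv[OF P pat_carrier[OF len]] by blast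
next
  assume "\<exists>Q\<in>set exceptional_patterns. equiv_pattern P Q \<and> pot_nilpotent TYPE('a) Q"
  then show "pot_nilpotent TYPE('a) P"
    using pot_nilpotent_equiv[OF P exceptional_carrier] by blast
qed

section \<open>The exceptional patterns\<close>

lemma pot_nilpotent_pat_witness:
  fixes w :: "'a::field list list"
  assumes "length q = 3" "length w = 3"
    and "\<forall>i<3. \<forall>j<3. (w ! i ! j \<noteq> 0) = q ! i ! j"
    and "tr3 (mat_of_rows_list 3 w) = 0" "minors3 (mat_of_rows_list 3 w) = 0"
    and "det3 (mat_of_rows_list 3 w) = 0"
  shows "pot_nilpotent TYPE('a) (pat q)"
proof -
  have "realizes (mat_of_rows_list 3 w) (pat q)"
    using assms(1-3) by (simp add: realizes_def pat_def mat_of_rows_list_def)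
  then show ?thesis
    using assms(4-6) pot_nilpotent3_iff[OF pat_carrier[OF assms(1)]] by blast
qed

lemma list1_pot_nilpotent:
  assumes "Q \<in> set list1"
  shows "pot_nilpotent TYPE('a::field) Q"
proof -
  have "pot_nilpotent TYPE('a) (pat [[Z,S,Z],[S,Z,S],[Z,S,Z]])"
    by (rule pot_nilpotent_pat_witness[where w = "[[0,1,0],[1,0,1],[0,-1,0]]"])
      (simp_all add: all3 mat_of_rows_list_def tr3_def minors3_def det3_def)
  moreover have "pot_nilpotent TYPE('a) (pat [[S,S,Z],[S,Z,S],[S,Z,S]])"
    by (rule pot_nilpotent_pat_witness[where w = "[[1,1,0],[-1,0,1],[1,0,-1]]"])
      (simp_all add: all3 mat_of_rows_list_def tr3_def minors3_def det3_def)
  moreover have "pot_nilpotent TYPE('a) (pat [[Z,S,Z],[S,S,S],[S,Z,S]])"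
    by (rule pot_nilpotent_pat_witness[where w = "[[0,1,0],[-1,1,1],[1,0,-1]]"])
      (simp_all add: all3 mat_of_rows_list_def tr3_def minors3_def det3_def)
  moreover have "pot_nilpotent TYPE('a) (pat [[S,S,S],[S,S,S],[S,S,Z]])"
    by (rule pot_nilpotent_pat_witness[where w = "[[1,1,1],[-1,-1,-1],[1,1,0]]"])
      (simp_all add: all3 mat_of_rows_list_def tr3_def minors3_def det3_def)
  ultimately show ?thesis
    using assms by (auto simp: list1_def)
qed

lemma list2_pot_nilpotent:
  assumes two: "(2::'a::field) \<noteq> 0" and "Q \<in> set list2"
  shows "pot_nilpotent TYPE('a) Q"
proof -
  have four: "(4::'a) \<noteq> 0"
    using two by (metis mult_2_right mult_eq_0_iff numeral_Bit0)
  have "pot_nilpotent TYPE('a) (pat [[S,S,Z],[S,Z,S],[Z,S,S]])"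
    by (rule pot_nilpotent_pat_witness[where w = "[[2,1,0],[-2,0,1],[0,-2,-2]]"])
      (simp_all add: all3 mat_of_rows_list_def tr3_def minors3_def det3_def two four)
  moreover have "pot_nilpotent TYPE('a) (pat [[S,S,S],[S,S,S],[S,Z,Z]])"
    by (rule pot_nilpotent_pat_witness[where w = "[[1,1,1],[1,-1,-1],[-2,0,0]]"])
      (simp_all add: all3 mat_of_rows_list_def tr3_def minors3_def det3_def two four)
  moreover have "pot_nilpotent TYPE('a) (pat [[S,S,S],[S,Z,S],[S,Z,S]])"
    by (rule pot_nilpotent_pat_witness[where w = "[[1,1,1],[-2,0,2],[1,0,-1]]"])
      (simp_all add: all3 mat_of_rows_list_def tr3_def minors3_def det3_def two four)
  moreover have "pot_nilpotent TYPE('a) (pat [[S,S,S],[S,S,S],[S,Z,S]])"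
    by (rule pot_nilpotent_pat_witness[where w = "[[1,1,1],[-1,1,-1],[-2,0,-2]]"])
      (simp_all add: all3 mat_of_rows_list_def tr3_def minors3_def det3_def two four)
  moreover have "pot_nilpotent TYPE('a) (pat [[Z,S,S],[S,Z,S],[S,S,Z]])"
    by (rule pot_nilpotent_pat_witness[where w = "[[0,1,1],[2,0,2],[2,-2,0]]"])
      (simp_all add: all3 mat_of_rows_list_def tr3_def minors3_def det3_def two four)
  moreover have "pot_nilpotent TYPE('a) (pat [[S,S,S],[S,S,S],[S,S,S]])"
    by (rule pot_nilpotent_pat_witness[where w = "[[1,1,1],[1,1,1],[-2,-2,-2]]"])
      (simp_all add: all3 mat_of_rows_list_def tr3_def minors3_def det3_def two four)
  ultimately show ?thesis
    using assms by (auto simp: list2_def)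
qed

lemma list3_pot_nilpotent:
  assumes two: "(2::'a::field) \<noteq> 0" and three: "(3::'a) \<noteq> 0" and "Q \<in> set list3"
  shows "pot_nilpotent TYPE('a) Q"
proof -
  have four: "(4::'a) \<noteq> 0"
    using two by (metis mult_2_right mult_eq_0_iff numeral_Bit0)
  have "pot_nilpotent TYPE('a) (pat [[S,S,Z],[S,S,S],[Z,S,S]])"
    by (rule pot_nilpotent_pat_witness[where w = "[[1,1,0],[1,-3,2],[0,-4,2]]"])
      (simp_all add: all3 mat_of_rows_list_def tr3_def minors3_def det3_def two three four)
  moreover have "pot_nilpotent TYPE('a) (pat [[S,S,Z],[S,S,S],[S,Z,S]])"
    by (rule pot_nilpotent_pat_witness[where w = "[[1,1,0],[-3,-2,1],[-1,0,1]]"])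
      (simp_all add: all3 mat_of_rows_list_def tr3_def minors3_def det3_def two three four)
  moreover have "pot_nilpotent TYPE('a) (pat [[Z,S,S],[S,S,S],[S,Z,S]])"
    by (rule pot_nilpotent_pat_witness[where w = "[[0,1,1],[-2,1,3],[1,0,-1]]"])
      (simp_all add: all3 mat_of_rows_list_def tr3_def minors3_def det3_def two three four)
  ultimately show ?thesis
    using assms by (auto simp: list3_def)
qed

lemma mod_ring_numeral_eq_zero:
  "(numeral n :: 'p::prime_card mod_ring) = 0 \<longleftrightarrow> CARD('p) dvd numeral n"
  using of_nat_eq_0_iff_char_dvd[where 'a = "'p mod_ring" and n = "numeral n"] by simp

lemma mod_ring_two_eq_zero: "(2 :: 'p::prime_card mod_ring) = 0 \<longleftrightarrow> CARD('p) = 2"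
proof -
  have "CARD('p) \<ge> 2" using prime_ge_2_nat[OF prime_card] .
  then have "CARD('p) dvd 2 \<longleftrightarrow> CARD('p) = 2"
    using dvd_imp_le[of "CARD('p)" 2] by auto
  then show ?thesis by (simp add: mod_ring_numeral_eq_zero)
qed

lemma mod_ring_three_eq_zero: "(3 :: 'p::prime_card mod_ring) = 0 \<longleftrightarrow> CARD('p) = 3"
proof -
  have "CARD('p) \<ge> 2" using prime_ge_2_nat[OF prime_card] .
  moreover have "CARD('p) \<le> 3" if "CARD('p) dvd 3"
    using dvd_imp_le[OF that] by simp
  ultimately have "CARD('p) dvd 3 \<longleftrightarrow> CARD('p) = 3"
    by (metis dvd_refl le_antisym not_less_eq_eq numeral_2_eq_2 numeral_3_eq_3 odd_numeral
        one_add_one)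
  then show ?thesis by (simp add: mod_ring_numeral_eq_zero)
qed

lemma mod_ring_elements:
  fixes x :: "'p::prime_card mod_ring"
  assumes "x \<noteq> 0"
  shows "CARD('p) = 2 \<Longrightarrow> x = 1" and "CARD('p) = 3 \<Longrightarrow> x = 1 \<or> x = -1"
proof -
  obtain i where i: "i < CARD('p)" "x = of_nat i"
    using surj_of_nat_mod_ring by blast
  show "x = 1" if "CARD('p) = 2"
    using i assms that by (auto simp: less_Suc_eq numeral_2_eq_2)
  show "x = 1 \<or> x = -1" if p3: "CARD('p) = 3"
  proof -
    have "(2 :: 'p mod_ring) = -1"
      using mod_ring_three_eq_zero[where 'p = 'p] p3 by (simp add: eq_neg_iff_add_eq_0)
    then show ?thesis
      using i assms p3 by (auto simp: less_Suc_eq numeral_3_eq_3 numeral_2_eq_2)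
  qed
qed

text \<open>Over Z_2 the only realization of a pattern is its 0/1 indicator matrix.\<close>

lemma mod2_pot_nilpotent_indicator:
  assumes p2: "CARD('p::prime_card) = 2" and P: "P \<in> carrier_mat 3 3"
    and pot: "pot_nilpotent TYPE('p mod_ring) P"
  shows "tr3 (map_mat of_bool P :: 'p mod_ring mat) = 0 \<and>
    minors3 (map_mat of_bool P :: 'p mod_ring mat) = 0 \<and>
    det3 (map_mat of_bool P :: 'p mod_ring mat) = 0"
proof -
  obtain A :: "'p mod_ring mat" where A: "realizes A P"
    and coeffs: "tr3 A = 0" "minors3 A = 0" "det3 A = 0"
    using pot pot_nilpotent3_iff[OF P] by blast
  have "A = map_mat of_bool P"
  proof (rule eq_matI)
    fix i j assume "i < dim_row (map_mat of_bool P :: 'p mod_ring mat)"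
      "j < dim_col (map_mat of_bool P :: 'p mod_ring mat)"
    then have ij: "i < 3" "j < 3" using P by auto
    show "A $$ (i, j) = map_mat of_bool P $$ (i, j)"
      using realizes_entry[OF A P ij] mod_ring_elements(1)[OF _ p2, of "A $$ (i, j)"] ij P
      by (cases "P $$ (i, j)") auto
  qed (use realizes_carrier[OF A P] P in auto)
  then show ?thesis using coeffs by simp
qed

lemma list2_list3_not_pot_nilpotent_mod2:
  assumes p2: "CARD('p::prime_card) = 2" and Q: "Q \<in> set list2 \<union> set list3"
  shows "\<not> pot_nilpotent TYPE('p mod_ring) Q"
proof
  assume pot: "pot_nilpotent TYPE('p mod_ring) Q"
  obtain q where q: "Q = pat q" "length q = 3"
    using Q by (auto simp: list2_def list3_def)
  have two: "(2 :: 'p mod_ring) = 0"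
    using mod_ring_two_eq_zero[where 'p = 'p] p2 by simp
  have "(3 :: 'p mod_ring) \<noteq> 0"
    using mod_ring_three_eq_zero[where 'p = 'p] p2 by simp
  then have three: "(0 :: 'p mod_ring) \<noteq> 3"
    by (rule not_sym)
  have "tr3 (map_mat of_bool Q :: 'p mod_ring mat) = 0 \<and>
      minors3 (map_mat of_bool Q :: 'p mod_ring mat) = 0 \<and>
      det3 (map_mat of_bool Q :: 'p mod_ring mat) = 0"
    using mod2_pot_nilpotent_indicator[OF p2 _ pot] q pat_carrier by blast
  then show False
    using Q p2 two three
    by (auto simp: list2_def list3_def pat_def mat_of_rows_list_def tr3_def minors3_def det3_def
        mod_ring_numeral_eq_zero)
qed

text \<open>Over Z_3 every realization has entries \<plusminus>1 on the stars; the third family admits no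
  nilpotent choice of signs (a finite check).\<close>

lemma list3_not_pot_nilpotent_mod3:
  assumes p3: "CARD('p::prime_card) = 3" and Q: "Q \<in> set list3"
  shows "\<not> pot_nilpotent TYPE('p mod_ring) Q"
proof
  have Q3: "Q \<in> carrier_mat 3 3"
    using Q by (auto simp: list3_def pat_carrier)
  assume "pot_nilpotent TYPE('p mod_ring) Q"
  then obtain A :: "'p mod_ring mat" where A: "realizes A Q"
    and coeffs: "tr3 A = 0" "minors3 A = 0" "det3 A = 0"
    using pot_nilpotent3_iff[OF Q3] by blast
  have entry: "A $$ (i, j) \<in> (if Q $$ (i, j) then {1, -1} else {0})" if "i < 3" "j < 3" for i j
    using realizes_entry[OF A Q3 that] mod_ring_elements(2)[OF _ p3, of "A $$ (i, j)"] by auto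
  have three: "(3 :: 'p mod_ring) = 0" and two: "(2 :: 'p mod_ring) \<noteq> 0"
    using mod_ring_three_eq_zero[where 'p = 'p] mod_ring_two_eq_zero[where 'p = 'p] p3 by auto
  have two_one: "(2 :: 'p mod_ring) \<noteq> 1"
    by (metis add_cancel_right_right one_add_one one_neq_zero)
  from Q show False
    using entry[of 0 0] entry[of 0 1] entry[of 0 2] entry[of 1 0] entry[of 1 1] entry[of 1 2]
      entry[of 2 0] entry[of 2 1] entry[of 2 2] coeffs
    by (auto simp: list3_def pat_def mat_of_rows_list_def tr3_def minors3_def det3_def three two two_one)
qed

lemma cubic_from_roots:
  "[:-a, 1:] * [:-b, 1:] * [:-c, 1:] =
    [:-(a * b * c), a * b + a * c + b * c, -(a + b + c), 1::'a::comm_ring_1:]"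
  by (simp add: algebra_simps)

text \<open>A realization of the cyclic pattern with diagonal a, b, c is nilpotent iff a, b, c are
  the roots of x^3 - abc; rescaling by a, this says that x^3 - 1 splits.\<close>

lemma pat4_pot_nilpotent_iff:
  "pot_nilpotent TYPE('a::field) pat4 \<longleftrightarrow> cube_minus_one_splits TYPE('a)"
proof
  have len: "length [[S,S,Z],[Z,S,S],[S,Z,S]] = 3" by simp
  assume "pot_nilpotent TYPE('a) pat4"
  then obtain A :: "'a mat" where A: "realizes A pat4"
    and coeffs: "tr3 A = 0" "minors3 A = 0"
    using pot_nilpotent3_iff[OF pat_carrier[OF len]] unfolding pat4_def by blast
  have zeros: "A $$ (0, 2) = 0" "A $$ (1, 0) = 0" "A $$ (2, 1) = 0"
    and a0: "A $$ (0, 0) \<noteq> 0"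
    using realizes_pat_entry[OF len A[unfolded pat4_def], of 0 2]
      realizes_pat_entry[OF len A[unfolded pat4_def], of 1 0]
      realizes_pat_entry[OF len A[unfolded pat4_def], of 2 1]
      realizes_pat_entry[OF len A[unfolded pat4_def], of 0 0] by simp_all
  define a b c where "a = A $$ (0, 0)" and "b = A $$ (1, 1)" and "c = A $$ (2, 2)"
  have sum: "a + b + c = 0" and sum2: "a * b + a * c + b * c = 0"
    using coeffs zeros by (simp_all add: a_def b_def c_def tr3_def minors3_def)
  have "a \<noteq> 0" using a0 by (simp add: a_def b_def c_def)
  have c: "c = - a - b"
    using sum by (simp add: algebra_simps eq_neg_iff_add_eq_0)
  have "a * a + a * b + b * b = - (a * b + a * c + b * c)"
    unfolding c by (simp add: algebra_simps)
  then have "a * a + a * b + b * b = 0"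
    using sum2 by simp
  moreover have "a * (b * c) = a * (a * a) - a * (a * a + a * b + b * b)"
    unfolding c by (simp add: algebra_simps)
  ultimately have "b * c = a * a"
    using \<open>a \<noteq> 0\<close> by simp
  then have "[:-1, 0, 0, 1:] = [:-1, 1:] * [:-(b / a), 1:] * [:-(c / a), 1:]"
    unfolding cubic_from_roots using sum sum2 \<open>a \<noteq> 0\<close>
    by (simp add: field_simps)
  then show "cube_minus_one_splits TYPE('a)"
    unfolding cube_minus_one_splits_def by blast
next
  assume "cube_minus_one_splits TYPE('a)"
  then obtain a b c :: 'a where "[:-1, 0, 0, 1:] = [:-a, 1:] * [:-b, 1:] * [:-c, 1:]"
    unfolding cube_minus_one_splits_def by blast
  then have vieta: "a * b * c = 1" "a * b + a * c + b * c = 0" "a + b + c = 0"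
    unfolding cubic_from_roots by (simp_all add: eq_neg_iff_add_eq_0 algebra_simps)
  then have nz: "a \<noteq> 0" "b \<noteq> 0" "c \<noteq> 0" by auto
  show "pot_nilpotent TYPE('a) pat4"
    unfolding pat4_def
    by (rule pot_nilpotent_pat_witness[where w = "[[a, 1, 0], [0, b, 1], [-1, 0, c]]"])
      (use vieta nz in \<open>simp_all add: all3 mat_of_rows_list_def tr3_def minors3_def det3_def
        algebra_simps\<close>)
qed

lemma exceptional_pot_nilpotent_iff:
  assumes Q: "Q \<in> set exceptional_patterns"
  shows "pot_nilpotent TYPE('p::prime_card mod_ring) Q \<longleftrightarrow>
    Q \<in> set list1 \<or> (Q \<in> set list2 \<and> CARD('p) \<noteq> 2) \<or>
    (Q \<in> set list3 \<and> CARD('p) \<notin> {2, 3}) \<or>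
    (Q = pat4 \<and> cube_minus_one_splits TYPE('p mod_ring))"
  using Q[unfolded exceptional_patterns_def] list1_pot_nilpotent list2_pot_nilpotent list3_pot_nilpotent pat4_pot_nilpotent_iff
    list2_list3_not_pot_nilpotent_mod2[where 'p = 'p] list3_not_pot_nilpotent_mod3[where 'p = 'p]
    mod_ring_two_eq_zero[where 'p = 'p] mod_ring_three_eq_zero[where 'p = 'p]
  by auto

theorem theorem5p3:
  fixes P :: "bool mat"
  assumes "P \<in> carrier_mat 3 3"
    and "irreducible_pattern P"
  shows "pot_nilpotent TYPE('p::prime_card mod_ring) P \<longleftrightarrow>
    ((\<exists>Q \<in> set list1. equiv_pattern P Q) \<or>
     ((\<exists>Q \<in> set list2. equiv_pattern P Q) \<and> CARD('p) \<noteq> 2) \<or>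
     ((\<exists>Q \<in> set list3. equiv_pattern P Q) \<and> CARD('p) \<notin> {2, 3}) \<or>
     (equiv_pattern P pat4 \<and> cube_minus_one_splits TYPE('p mod_ring)))"
proof -
  have "pot_nilpotent TYPE('p mod_ring) P \<longleftrightarrow>
      (\<exists>Q\<in>set exceptional_patterns.
        equiv_pattern P Q \<and> pot_nilpotent TYPE('p mod_ring) Q)"
    by (rule pot_nilpotent_iff_exceptional[OF assms])
  also have "\<dots> \<longleftrightarrow> (\<exists>Q\<in>set exceptional_patterns. equiv_pattern P Q \<and>
      (Q \<in> set list1 \<or> (Q \<in> set list2 \<and> CARD('p) \<noteq> 2) \<or>
       (Q \<in> set list3 \<and> CARD('p) \<notin> {2, 3}) \<or>
       (Q = pat4 \<and> cube_minus_one_splits TYPE('p mod_ring))))"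
    using exceptional_pot_nilpotent_iff by blast
  finally show ?thesis
    by (auto simp: exceptional_patterns_def)
qed

end
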